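(* Let $\mathcal{X}_V,\mathcal{X}_L$ be finite sets with $N_V=|\mathcal{X}_V|$, $N_L=|\mathcal{X}_L|$, let $\mathcal{P}_M$ be a joint distribution on $\mathcal{X}_V\times\mathcal{X}_L$ with everywhere positive marginals $\mathcal{P}_V,\mathcal{P}_L$, and let $\tilde P_M\in\mathbb{R}^{N_V\times N_L}$, $(\tilde P_M)_{x_v,x_l}=\mathcal{P}_M(x_v,x_l)/\sqrt{\mathcal{P}_V(x_v)\mathcal{P}_L(x_l)}$. Let $\tilde P_M=U\Sigma V^\top$ be a singular value decomposition with $r=\min(N_V,N_L)$, $U\in\mathbb{R}^{N_V\times r}$, $V\in\mathbb{R}^{N_L\times r}$ having orthonormal columns and $\Sigma=\mathrm{diag}(\sigma_1,\dots,\sigma_r)$ with $\sigma_1\ge\dots\ge\sigma_r\ge0$. Let $k\le r$ and let $U^k,V^k$ be the submatrices consisting of the first $k$ columns of $U,V$. Consider the loss, over all functions $f_V:\mathcal{X}_V\to\mathbb{R}^k$, $f_L:\mathcal{X}_L\to\mathbb{R}^k$, $$\mathcal{L}_{\rm SCL}(f_V,f_L)=-2\,\mathbb{E}_{(x_v,x_l)\sim\mathcal{P}_M}f_V(x_v)^\top f_L(x_l)+\mathbb{E}_{x_v^-\sim\mathcal{P}_V,\,x_l^-\sim\mathcal{P}_L}\big(f_V(x_v^-)^\top f_L(x_l^-)\big)^2$$ (with $x_v^-,x_l^-$ independent). Then $\mathcal{L}_{\rm SCL}$ attains its minimum at the encoders given, for all $x_v\in\mathcal{X}_V$, $x_l\in\mathcal{X}_L$,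 by $$f^*_V(x_v)=\frac{1}{\sqrt{\mathcal{P}_V(x_v)}}\big(U^k_{x_v}DR\big)^\top,\qquad f^*_L(x_l)=\frac{1}{\sqrt{\mathcal{P}_L(x_l)}}\big(V^k_{x_l}\,\mathrm{diag}(\sigma_1,\dots,\sigma_k)\,D^{-1}R\big)^\top,$$ where $U^k_{x}$ denotes the row of $U^k$ indexed by $x$ (similarly for $V^k$), $D\in\mathbb{R}^{k\times k}$ is an arbitrary invertible diagonal matrix, and $R\in\mathbb{R}^{k\times k}$ is an arbitrary orthogonal matrix.
   Context: The encoders are assumed expressive enough to realize any functions $f_V,f_L$, i.e., the minimization is over all functions. *)

theory Defs
  imports "HOL-Analysis.Analysis"
begin

text \<open>Encoders into R^k are represented as functions 'a => nat => real,
  only coordinates i < k being relevant.\<close>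

definition inner_k :: "nat \<Rightarrow> (nat \<Rightarrow> real) \<Rightarrow> (nat \<Rightarrow> real) \<Rightarrow> real" where
  "inner_k k a b = (\<Sum>i<k. a i * b i)"

definition margV :: "('v::finite \<Rightarrow> 'l::finite \<Rightarrow> real) \<Rightarrow> 'v \<Rightarrow> real" where
  "margV P xv = (\<Sum>xl\<in>UNIV. P xv xl)"

definition margL :: "('v::finite \<Rightarrow> 'l::finite \<Rightarrow> real) \<Rightarrow> 'l \<Rightarrow> real" where
  "margL P xl = (\<Sum>xv\<in>UNIV. P xv xl)"

definition is_joint_distribution :: "('v::finite \<Rightarrow> 'l::finite \<Rightarrow> real) \<Rightarrow> bool" where
  "is_joint_distribution P \<longleftrightarrow> (\<forall>xv xl. 0 \<le> P xv xl) \<and> (\<Sum>xv\<in>UNIV. \<Sum>xl\<in>UNIV. P xv xl) = 1"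

definition Ptilde :: "('v::finite \<Rightarrow> 'l::finite \<Rightarrow> real) \<Rightarrow> 'v \<Rightarrow> 'l \<Rightarrow> real" where
  "Ptilde P xv xl = P xv xl / sqrt (margV P xv * margL P xl)"

definition L_SCL :: "nat \<Rightarrow> ('v::finite \<Rightarrow> 'l::finite \<Rightarrow> real)
    \<Rightarrow> ('v \<Rightarrow> nat \<Rightarrow> real) \<Rightarrow> ('l \<Rightarrow> nat \<Rightarrow> real) \<Rightarrow> real" where
  "L_SCL k P fV fL =
     - 2 * (\<Sum>xv\<in>UNIV. \<Sum>xl\<in>UNIV. P xv xl * inner_k k (fV xv) (fL xl))
     + (\<Sum>xv\<in>UNIV. \<Sum>xl\<in>UNIV. margV P xv * margL P xl * (inner_k k (fV xv) (fL xl))\<^sup>2)"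

definition orthonormal_cols :: "nat \<Rightarrow> ('a::finite \<Rightarrow> nat \<Rightarrow> real) \<Rightarrow> bool" where
  "orthonormal_cols r U \<longleftrightarrow>
     (\<forall>i<r. \<forall>j<r. (\<Sum>x\<in>UNIV. U x i * U x j) = (if i = j then 1 else 0))"

definition orthogonal_k :: "nat \<Rightarrow> (nat \<Rightarrow> nat \<Rightarrow> real) \<Rightarrow> bool" where
  "orthogonal_k k R \<longleftrightarrow>
     (\<forall>i<k. \<forall>j<k. (\<Sum>m<k. R m i * R m j) = (if i = j then 1 else 0))"

end

theory Submission
  imports Defs "Jordan_Normal_Form.Determinant"
begin

text \<open>Write P for the normalised matrix Ptilde P = U Sigma V^T and put F x = sqrt (P_V x) f_V x,
  G y = sqrt (P_L y) f_L y. Completing the square turns the loss into |P - F G^T|^2 - |P|^2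
  (Frobenius norms), so minimising it is best approximation of P by matrices of rank at most k.
  The given encoders yield F G^T = U^k diag (sigma_1, ..., sigma_k) (V^k)^T, since R R^T = I and
  D D^-1 = I, and this truncated SVD has error sigma_(k+1)^2 + ... + sigma_r^2. Conversely
  (Eckart-Young), the rows of any F G^T lie in a subspace with an orthonormal basis Q of at most
  k vectors. Projecting the rows of P onto it captures the energy sum_i sigma_i^2 w_i with
  w_i = sum_q <v_i, q>^2 (v_i the columns of V); Bessel's inequality gives 0 <= w_i <= 1 and
  sum_i w_i <= k, so the captured energy is at most sigma_1^2 + ... + sigma_k^2.\<close>

definition orthonormal_on :: "'i set \<Rightarrow> ('i \<Rightarrow> 'a::real_inner) \<Rightarrow> bool" where
  "orthonormal_on I e \<longleftrightarrow> (\<forall>i\<in>I. \<forall>j\<in>I. inner (e i) (e j) = (if i = j then 1 else 0))"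

lemma orthonormal_on_subset: "orthonormal_on J e \<Longrightarrow> I \<subseteq> J \<Longrightarrow> orthonormal_on I e"
  unfolding orthonormal_on_def by blast

lemma inner_sum_orthonormal:
  assumes "orthonormal_on I e" and "finite I"
  shows "inner (\<Sum>i\<in>I. c i *\<^sub>R e i) (\<Sum>j\<in>I. c' j *\<^sub>R e j) = (\<Sum>i\<in>I. c i * c' i)"
proof -
  have "inner (\<Sum>i\<in>I. c i *\<^sub>R e i) (\<Sum>j\<in>I. c' j *\<^sub>R e j)
      = (\<Sum>i\<in>I. \<Sum>j\<in>I. c i * c' j * inner (e i) (e j))"
    unfolding inner_sum_left unfolding inner_sum_right by (simp add: mult_ac)
  also have "\<dots> = (\<Sum>i\<in>I. \<Sum>j\<in>I. if i = j then c i * c' j else 0)"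
    using assms(1) unfolding orthonormal_on_def by (intro sum.cong refl) auto
  also have "\<dots> = (\<Sum>i\<in>I. c i * c' i)"
    using assms(2) by simp
  finally show ?thesis .
qed

lemma inner_diff_sum_orthonormal:
  assumes "orthonormal_on I e" and "finite I"
  shows "inner (a - (\<Sum>i\<in>I. c i *\<^sub>R e i)) (a - (\<Sum>i\<in>I. c i *\<^sub>R e i))
       = inner a a - (\<Sum>i\<in>I. (inner a (e i))\<^sup>2) + (\<Sum>i\<in>I. (c i - inner a (e i))\<^sup>2)"
proof -
  have "inner (a - (\<Sum>i\<in>I. c i *\<^sub>R e i)) (a - (\<Sum>i\<in>I. c i *\<^sub>R e i))
      = inner a a - 2 * (\<Sum>i\<in>I. c i * inner a (e i)) + (\<Sum>i\<in>I. (c i)\<^sup>2)"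
    using inner_sum_orthonormal[OF assms, of c c]
    by (simp add: inner_diff_left inner_diff_right inner_sum_right inner_commute power2_eq_square)
  moreover have "(\<Sum>i\<in>I. (c i - inner a (e i))\<^sup>2)
      = (\<Sum>i\<in>I. (c i)\<^sup>2) + (\<Sum>i\<in>I. (inner a (e i))\<^sup>2) - 2 * (\<Sum>i\<in>I. c i * inner a (e i))"
    by (simp add: power2_diff sum.distrib sum_subtractf sum_distrib_left mult.assoc)
  ultimately show ?thesis by linarith
qed

lemma bessel_inequality:
  assumes "orthonormal_on I e" and "finite I"
  shows "(\<Sum>i\<in>I. (inner a (e i))\<^sup>2) \<le> inner a a"
  using inner_diff_sum_orthonormal[OF assms, of a "\<lambda>i. inner a (e i)"]
    inner_ge_zero[of "a - (\<Sum>i\<in>I. inner a (e i) *\<^sub>R e i)"]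
  by simp

lemma inner_diff_sum_orthonormal_ge:
  assumes "orthonormal_on I e" and "finite I"
  shows "inner a a - (\<Sum>i\<in>I. (inner a (e i))\<^sup>2)
       \<le> inner (a - (\<Sum>i\<in>I. c i *\<^sub>R e i)) (a - (\<Sum>i\<in>I. c i *\<^sub>R e i))"
  unfolding inner_diff_sum_orthonormal[OF assms] by (simp add: sum_nonneg)

lemma orthonormal_basis_of_span:
  fixes B :: "'a::euclidean_space set"
  assumes "finite B"
  obtains Q where "orthonormal_on Q id" "finite Q" "card Q \<le> card B" "span Q = span B"
proof -
  \<comment> \<open>qualified because Jordan_Normal_Form also defines \<open>orthogonal\<close>\<close>
  obtain Q where "Q \<subseteq> span B" and orth: "pairwise real_inner_class.orthogonal Q"
    and unit: "\<And>q. q \<in> Q \<Longrightarrow> norm q = 1"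
    and "independent Q" and card: "card Q = dim (span B)" and "span Q = span B"
    using orthonormal_basis_subspace[OF subspace_span[of B]] by metis
  have "orthonormal_on Q id"
    unfolding orthonormal_on_def
  proof (intro ballI)
    fix q q' assume "q \<in> Q" "q' \<in> Q"
    then show "inner (id q) (id q') = (if q = q' then 1 else 0)"
      using orth unit[of q] unfolding pairwise_def real_inner_class.orthogonal_def
      by (cases "q = q'") (simp_all add: dot_square_norm)
  qed
  moreover have "finite Q"
    using \<open>independent Q\<close> by (rule independent_imp_finite)
  moreover have "card Q \<le> card B"
    using dim_le_card'[OF assms] card by simp
  ultimately show thesis
    using \<open>span Q = span B\<close> by (rule that)
qed

lemma sum_lessThan_split:
  fixes f :: "nat \<Rightarrow> 'a::comm_monoid_add"
  assumes "k \<le> r"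
  shows "(\<Sum>i<r. f i) = (\<Sum>i<k. f i) + (\<Sum>i\<in>{k..<r}. f i)"
  using sum.atLeastLessThan_concat[of 0 k r f] assms by (simp add: atLeast0LessThan)

lemma weighted_sum_le_sum_of_largest:
  fixes s w :: "nat \<Rightarrow> real"
  assumes antimono: "\<And>i j. i \<le> j \<Longrightarrow> j < r \<Longrightarrow> s j \<le> s i"
    and nonneg: "\<And>i. i < r \<Longrightarrow> 0 \<le> s i"
    and w_bounds: "\<And>i. i < r \<Longrightarrow> 0 \<le> w i \<and> w i \<le> 1"
    and w_sum: "(\<Sum>i<r. w i) \<le> real k" and "k \<le> r"
  shows "(\<Sum>i<r. s i * w i) \<le> (\<Sum>i<k. s i)"
proof -
  \<comment> \<open>measured against the threshold \<open>c\<close>, each of the three correction terms below is \<open>\<le> 0\<close>\<close>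
  define c where "c = (if k < r then s k else 0)"
  have "0 \<le> c" using nonneg by (simp add: c_def)
  have head: "(s i - c) * (w i - 1) \<le> 0" if "i \<in> {..<k}" for i
  proof -
    have "c \<le> s i" using that \<open>k \<le> r\<close> antimono nonneg by (auto simp: c_def)
    then show ?thesis using w_bounds[of i] that \<open>k \<le> r\<close> by (auto intro: mult_nonneg_nonpos)
  qed
  have tail: "(s i - c) * w i \<le> 0" if "i \<in> {k..<r}" for i
  proof -
    have "s i \<le> c" using that antimono by (auto simp: c_def)
    then show ?thesis using w_bounds[of i] that by (simp add: mult_nonpos_nonneg)
  qed
  have "(\<Sum>i<k. (s i - c) * (w i - 1)) = (\<Sum>i<k. s i * w i) - (\<Sum>i<k. s i) - c * (\<Sum>i<k. w i) + c * k"
    by (simp add: left_diff_distrib right_diff_distrib sum_subtractf sum_distrib_left)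
  moreover have "(\<Sum>i\<in>{k..<r}. (s i - c) * w i) = (\<Sum>i\<in>{k..<r}. s i * w i) - c * (\<Sum>i\<in>{k..<r}. w i)"
    by (simp add: left_diff_distrib sum_subtractf sum_distrib_left)
  moreover have "(\<Sum>i<k. (s i - c) * (w i - 1)) \<le> 0" "(\<Sum>i\<in>{k..<r}. (s i - c) * w i) \<le> 0"
    using sum_nonpos[of "{..<k}", OF head] sum_nonpos[of "{k..<r}", OF tail] by auto
  moreover have "c * (\<Sum>i<k. w i) + c * (\<Sum>i\<in>{k..<r}. w i) \<le> c * k"
    using mult_left_mono[OF w_sum \<open>0 \<le> c\<close>]
    unfolding sum_lessThan_split[OF \<open>k \<le> r\<close>, of w] by (simp add: distrib_left)
  ultimately show ?thesis
    unfolding sum_lessThan_split[OF \<open>k \<le> r\<close>, of "\<lambda>i. s i * w i"] by linarith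
qed

definition colvec :: "('a::finite \<Rightarrow> nat \<Rightarrow> real) \<Rightarrow> nat \<Rightarrow> real^'a" where
  "colvec U i = (\<chi> x. U x i)"

lemma orthonormal_cols_iff_colvec: "orthonormal_cols r U \<longleftrightarrow> orthonormal_on {..<r} (colvec U)"
  unfolding orthonormal_cols_def orthonormal_on_def Ball_def lessThan_iff
  by (simp add: colvec_def inner_vec_def)

lemma sum_sq_orthonormal_cols:
  assumes "orthonormal_cols r U" and "I \<subseteq> {..<r}"
  shows "(\<Sum>x\<in>UNIV. (\<Sum>i\<in>I. c i * U x i)\<^sup>2) = (\<Sum>i\<in>I. (c i)\<^sup>2)"
proof -
  have "orthonormal_on I (colvec U)"
    using assms orthonormal_on_subset by (auto simp: orthonormal_cols_iff_colvec)
  moreover have "finite I"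
    using assms(2) by (rule finite_subset) simp
  ultimately have "inner (\<Sum>i\<in>I. c i *\<^sub>R colvec U i) (\<Sum>i\<in>I. c i *\<^sub>R colvec U i) = (\<Sum>i\<in>I. c i * c i)"
    by (rule inner_sum_orthonormal)
  then show ?thesis
    by (simp add: inner_vec_def colvec_def power2_eq_square)
qed

lemma sum_sq_svd_terms:
  fixes U :: "'a::finite \<Rightarrow> nat \<Rightarrow> real" and V :: "'b::finite \<Rightarrow> nat \<Rightarrow> real"
  assumes U: "orthonormal_cols r U" and V: "orthonormal_cols r V" and I: "I \<subseteq> {..<r}"
  shows "(\<Sum>x\<in>UNIV. \<Sum>y\<in>UNIV. (\<Sum>i\<in>I. U x i * \<sigma> i * V y i)\<^sup>2) = (\<Sum>i\<in>I. (\<sigma> i)\<^sup>2)"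
proof -
  have "(\<Sum>x\<in>UNIV. \<Sum>y\<in>UNIV. (\<Sum>i\<in>I. U x i * \<sigma> i * V y i)\<^sup>2) = (\<Sum>x\<in>UNIV. \<Sum>i\<in>I. (U x i * \<sigma> i)\<^sup>2)"
    using sum_sq_orthonormal_cols[OF V I] by simp
  also have "\<dots> = (\<Sum>i\<in>I. (\<sigma> i)\<^sup>2 * (\<Sum>x\<in>UNIV. U x i * U x i))"
    by (subst sum.swap) (simp add: sum_distrib_left power2_eq_square mult_ac)
  also have "\<dots> = (\<Sum>i\<in>I. (\<sigma> i)\<^sup>2)"
    using U I by (intro sum.cong refl) (auto simp: orthonormal_cols_def)
  finally show ?thesis .
qed

lemma weighted_sum_sq_inner_orthonormal_le:
  fixes v :: "nat \<Rightarrow> 'a::real_inner"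
  assumes v: "orthonormal_on {..<r} v"
    and Q: "orthonormal_on Q id" "finite Q" "card Q \<le> k" and "k \<le> r"
    and antimono: "\<And>i j. i \<le> j \<Longrightarrow> j < r \<Longrightarrow> s j \<le> s i"
    and nonneg: "\<And>i. i < r \<Longrightarrow> 0 \<le> s i"
  shows "(\<Sum>i<r. s i * (\<Sum>q\<in>Q. (inner (v i) q)\<^sup>2)) \<le> (\<Sum>i<k. s i)"
proof (rule weighted_sum_le_sum_of_largest[OF antimono nonneg _ _ \<open>k \<le> r\<close>])
  fix i assume "i < r"
  have "(\<Sum>q\<in>Q. (inner (v i) q)\<^sup>2) \<le> inner (v i) (v i)"
    using bessel_inequality[OF Q(1,2)] by simp
  also have "\<dots> = 1"
    using v \<open>i < r\<close> by (simp add: orthonormal_on_def)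
  finally show "0 \<le> (\<Sum>q\<in>Q. (inner (v i) q)\<^sup>2) \<and> (\<Sum>q\<in>Q. (inner (v i) q)\<^sup>2) \<le> 1"
    by (simp add: sum_nonneg)
next
  have "(\<Sum>i<r. \<Sum>q\<in>Q. (inner (v i) q)\<^sup>2) = (\<Sum>q\<in>Q. \<Sum>i<r. (inner q (v i))\<^sup>2)"
    by (subst sum.swap) (simp add: inner_commute)
  also have "\<dots> \<le> (\<Sum>q\<in>Q. inner q q)"
    by (intro sum_mono bessel_inequality[OF v]) simp
  also have "\<dots> = card Q"
    using Q(1) by (simp add: orthonormal_on_def)
  finally show "(\<Sum>i<r. \<Sum>q\<in>Q. (inner (v i) q)\<^sup>2) \<le> real k"
    using \<open>card Q \<le> k\<close> by simp
qed

lemma sum_sq_inner_svd_rows_le: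
  fixes U :: "'a::finite \<Rightarrow> nat \<Rightarrow> real" and V :: "'b::finite \<Rightarrow> nat \<Rightarrow> real"
  assumes U: "orthonormal_cols r U" and V: "orthonormal_cols r V"
    and Q: "orthonormal_on Q id" "finite Q" "card Q \<le> k" and "k \<le> r"
    and antimono: "\<And>i j. i \<le> j \<Longrightarrow> j < r \<Longrightarrow> \<sigma> j \<le> \<sigma> i"
    and nonneg: "\<And>i. i < r \<Longrightarrow> 0 \<le> \<sigma> i"
  shows "(\<Sum>x\<in>UNIV. \<Sum>q\<in>Q. (inner (\<Sum>i<r. (U x i * \<sigma> i) *\<^sub>R colvec V i) q)\<^sup>2) \<le> (\<Sum>i<k. (\<sigma> i)\<^sup>2)"
proof -
  have "(\<Sum>x\<in>UNIV. (inner (\<Sum>i<r. (U x i * \<sigma> i) *\<^sub>R colvec V i) q)\<^sup>2)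
      = (\<Sum>i<r. (\<sigma> i * inner (colvec V i) q)\<^sup>2)" for q
  proof -
    have "inner (\<Sum>i<r. (U x i * \<sigma> i) *\<^sub>R colvec V i) q = (\<Sum>i<r. (\<sigma> i * inner (colvec V i) q) * U x i)" for x
      by (simp add: inner_sum_left mult_ac)
    then show ?thesis
      using sum_sq_orthonormal_cols[OF U, of "{..<r}"] by simp
  qed
  then have "(\<Sum>x\<in>UNIV. \<Sum>q\<in>Q. (inner (\<Sum>i<r. (U x i * \<sigma> i) *\<^sub>R colvec V i) q)\<^sup>2)
      = (\<Sum>q\<in>Q. \<Sum>i<r. (\<sigma> i * inner (colvec V i) q)\<^sup>2)"
    by (subst sum.swap) simp
  also have "\<dots> = (\<Sum>i<r. (\<sigma> i)\<^sup>2 * (\<Sum>q\<in>Q. (inner (colvec V i) q)\<^sup>2))"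
    by (subst sum.swap) (simp add: sum_distrib_left power_mult_distrib)
  also have "\<dots> \<le> (\<Sum>i<k. (\<sigma> i)\<^sup>2)"
  proof (rule weighted_sum_sq_inner_orthonormal_le[OF _ Q \<open>k \<le> r\<close>])
    show "orthonormal_on {..<r} (colvec V)"
      using V by (simp add: orthonormal_cols_iff_colvec)
    show "(\<sigma> j)\<^sup>2 \<le> (\<sigma> i)\<^sup>2" if "i \<le> j" "j < r" for i j
      using antimono[OF that] nonneg[of j] that by (simp add: power_mono)
  qed simp
  finally show ?thesis .
qed

lemma eckart_young_lower_bound:
  fixes U :: "'a::finite \<Rightarrow> nat \<Rightarrow> real" and V :: "'b::finite \<Rightarrow> nat \<Rightarrow> real"
    and F :: "'a \<Rightarrow> nat \<Rightarrow> real" and G :: "'b \<Rightarrow> nat \<Rightarrow> real"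
  assumes U: "orthonormal_cols r U" and V: "orthonormal_cols r V" and "k \<le> r"
    and antimono: "\<And>i j. i \<le> j \<Longrightarrow> j < r \<Longrightarrow> \<sigma> j \<le> \<sigma> i"
    and nonneg: "\<And>i. i < r \<Longrightarrow> 0 \<le> \<sigma> i"
  shows "(\<Sum>i\<in>{k..<r}. (\<sigma> i)\<^sup>2)
    \<le> (\<Sum>x\<in>UNIV. \<Sum>y\<in>UNIV. ((\<Sum>i<r. U x i * \<sigma> i * V y i) - (\<Sum>j<k. F x j * G y j))\<^sup>2)"
proof -
  define row :: "'a \<Rightarrow> real^'b" where "row x = (\<Sum>i<r. (U x i * \<sigma> i) *\<^sub>R colvec V i)" for x
  define approx :: "'a \<Rightarrow> real^'b" where "approx x = (\<Sum>j<k. F x j *\<^sub>R colvec G j)" for x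
  obtain Q where Q: "orthonormal_on Q id" "finite Q" "card Q \<le> card (colvec G ` {..<k})"
    and span_Q: "span Q = span (colvec G ` {..<k})"
    by (rule orthonormal_basis_of_span[of "colvec G ` {..<k}"]) simp
  have card_Q: "card Q \<le> k"
    using Q(3) card_image_le[of "{..<k}" "colvec G"] by simp
  have error: "(\<Sum>x\<in>UNIV. \<Sum>y\<in>UNIV. ((\<Sum>i<r. U x i * \<sigma> i * V y i) - (\<Sum>j<k. F x j * G y j))\<^sup>2)
      = (\<Sum>x\<in>UNIV. inner (row x - approx x) (row x - approx x))"
    by (simp add: inner_vec_def row_def approx_def colvec_def power2_eq_square)
  have total: "(\<Sum>x\<in>UNIV. inner (row x) (row x)) = (\<Sum>i<r. (\<sigma> i)\<^sup>2)"
    using sum_sq_svd_terms[OF U V, of "{..<r}" \<sigma>]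
    by (simp add: inner_vec_def row_def colvec_def power2_eq_square)
  have "inner (row x) (row x) - (\<Sum>q\<in>Q. (inner (row x) q)\<^sup>2) \<le> inner (row x - approx x) (row x - approx x)" for x
  proof -
    have "approx x \<in> span Q"
      unfolding span_Q approx_def by (intro span_sum span_scale span_base) auto
    then obtain c where "approx x = (\<Sum>q\<in>Q. c q *\<^sub>R q)"
      using span_finite[OF Q(2)] by auto
    then show ?thesis
      using inner_diff_sum_orthonormal_ge[OF Q(1,2), of "row x" c] by simp
  qed
  then have "(\<Sum>x\<in>UNIV. inner (row x) (row x)) - (\<Sum>x\<in>UNIV. \<Sum>q\<in>Q. (inner (row x) q)\<^sup>2)
      \<le> (\<Sum>x\<in>UNIV. inner (row x - approx x) (row x - approx x))"
    by (simp add: sum_subtractf[symmetric] sum_mono)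
  moreover have "(\<Sum>x\<in>UNIV. \<Sum>q\<in>Q. (inner (row x) q)\<^sup>2) \<le> (\<Sum>i<k. (\<sigma> i)\<^sup>2)"
    unfolding row_def
    by (rule sum_sq_inner_svd_rows_le[OF U V Q(1,2) card_Q \<open>k \<le> r\<close> antimono nonneg])
  ultimately show ?thesis
    unfolding error using total sum_lessThan_split[OF \<open>k \<le> r\<close>, of "\<lambda>i. (\<sigma> i)\<^sup>2"] by linarith
qed

lemma orthogonal_k_rows:
  assumes "orthogonal_k k R" and "i < k" and "j < k"
  shows "(\<Sum>m<k. R i m * R j m) = (if i = j then 1 else 0)"
proof -
  define A :: "real mat" where "A = mat k k (\<lambda>(i, j). R i j)"
  have A: "A \<in> carrier_mat k k" and AT: "transpose_mat A \<in> carrier_mat k k"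
    unfolding A_def by simp_all
  have "transpose_mat A * A = 1\<^sub>m k"
  proof (rule eq_matI)
    fix i j assume "i < dim_row (1\<^sub>m k :: real mat)" "j < dim_col (1\<^sub>m k :: real mat)"
    then show "(transpose_mat A * A) $$ (i, j) = 1\<^sub>m k $$ (i, j)"
      using assms(1) unfolding orthogonal_k_def A_def
      by (simp add: scalar_prod_def atLeast0LessThan)
  qed (simp_all add: A_def)
  then have "A * transpose_mat A = 1\<^sub>m k"
    by (rule mat_mult_left_right_inverse[OF AT A])
  then have "(A * transpose_mat A) $$ (i, j) = 1\<^sub>m k $$ (i, j)"
    by simp
  then show ?thesis
    using assms(2,3) unfolding A_def by (simp add: scalar_prod_def atLeast0LessThan)
qed

lemma inner_k_orthogonal_k:
  assumes "orthogonal_k k R"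
  shows "inner_k k (\<lambda>j. \<Sum>i<k. a i * R i j) (\<lambda>j. \<Sum>i<k. b i * R i j) = (\<Sum>i<k. a i * b i)"
proof -
  have "inner_k k (\<lambda>j. \<Sum>i<k. a i * R i j) (\<lambda>j. \<Sum>i<k. b i * R i j)
      = (\<Sum>j<k. \<Sum>i<k. \<Sum>i'<k. a i * b i' * (R i j * R i' j))"
    unfolding inner_k_def sum_product by (simp add: mult_ac)
  also have "\<dots> = (\<Sum>i<k. \<Sum>i'<k. \<Sum>j<k. a i * b i' * (R i j * R i' j))"
    by (subst sum.swap) (rule sum.cong[OF refl], rule sum.swap)
  also have "\<dots> = (\<Sum>i<k. \<Sum>i'<k. if i = i' then a i * b i' else 0)"
    using orthogonal_k_rows[OF assms] by (intro sum.cong refl) (simp add: sum_distrib_left[symmetric])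
  also have "\<dots> = (\<Sum>i<k. a i * b i)"
    by simp
  finally show ?thesis .
qed

lemma L_SCL_eq_approx_error:
  fixes P :: "'v::finite \<Rightarrow> 'l::finite \<Rightarrow> real"
  assumes posV: "\<And>x. 0 < margV P x" and posL: "\<And>y. 0 < margL P y"
  shows "L_SCL k P fV fL
    = (\<Sum>x\<in>UNIV. \<Sum>y\<in>UNIV. (Ptilde P x y
         - (\<Sum>j<k. (sqrt (margV P x) * fV x j) * (sqrt (margL P y) * fL y j)))\<^sup>2)
      - (\<Sum>x\<in>UNIV. \<Sum>y\<in>UNIV. (Ptilde P x y)\<^sup>2)"
proof -
  have pointwise: "- 2 * (P x y * inner_k k (fV x) (fL y)) + margV P x * margL P y * (inner_k k (fV x) (fL y))\<^sup>2
    = (Ptilde P x y - (\<Sum>j<k. (sqrt (margV P x) * fV x j) * (sqrt (margL P y) * fL y j)))\<^sup>2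
      - (Ptilde P x y)\<^sup>2" for x y
  proof -
    define s where "s = sqrt (margV P x) * sqrt (margL P y)"
    have "P x y = s * Ptilde P x y" and "margV P x * margL P y = s\<^sup>2"
      using posV[of x] posL[of y] by (simp_all add: s_def Ptilde_def real_sqrt_mult power_mult_distrib)
    moreover have "(\<Sum>j<k. (sqrt (margV P x) * fV x j) * (sqrt (margL P y) * fL y j))
        = s * inner_k k (fV x) (fL y)"
      by (simp add: s_def inner_k_def sum_distrib_left mult_ac)
    ultimately show ?thesis
      by (simp add: power2_eq_square algebra_simps)
  qed
  have "L_SCL k P fV fL = (\<Sum>x\<in>UNIV. \<Sum>y\<in>UNIV.
      - 2 * (P x y * inner_k k (fV x) (fL y)) + margV P x * margL P y * (inner_k k (fV x) (fL y))\<^sup>2)"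
    unfolding L_SCL_def sum_distrib_left sum.distrib[symmetric] ..
  also have "\<dots> = (\<Sum>x\<in>UNIV. \<Sum>y\<in>UNIV.
      (Ptilde P x y - (\<Sum>j<k. (sqrt (margV P x) * fV x j) * (sqrt (margL P y) * fL y j)))\<^sup>2
      - (Ptilde P x y)\<^sup>2)"
    by (simp only: pointwise)
  finally show ?thesis
    by (simp add: sum_subtractf)
qed

theorem theorem3p2:
  fixes P :: "'v::finite \<Rightarrow> 'l::finite \<Rightarrow> real"
    and U :: "'v \<Rightarrow> nat \<Rightarrow> real" and V :: "'l \<Rightarrow> nat \<Rightarrow> real"
    and \<sigma> :: "nat \<Rightarrow> real" and r k :: nat
    and d :: "nat \<Rightarrow> real" and R :: "nat \<Rightarrow> nat \<Rightarrow> real"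
  assumes dist: "is_joint_distribution P"
    and posV: "\<forall>xv. 0 < margV P xv"
    and posL: "\<forall>xl. 0 < margL P xl"
    and r_def: "r = min CARD('v) CARD('l)"
    and svd: "\<forall>xv xl. Ptilde P xv xl = (\<Sum>i<r. U xv i * \<sigma> i * V xl i)"
    and U_on: "orthonormal_cols r U"
    and V_on: "orthonormal_cols r V"
    and \<sigma>_mono: "\<forall>i j. i \<le> j \<longrightarrow> j < r \<longrightarrow> \<sigma> j \<le> \<sigma> i"
    and \<sigma>_nonneg: "\<forall>i<r. 0 \<le> \<sigma> i"
    and k_le: "k \<le> r"
    and d_inv: "\<forall>i<k. d i \<noteq> 0"
    and R_orth: "orthogonal_k k R"
  shows "\<forall>fV fL. L_SCL k P
           (\<lambda>xv j. (1 / sqrt (margV P xv)) * (\<Sum>i<k. U xv i * d i * R i j))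
           (\<lambda>xl j. (1 / sqrt (margL P xl)) * (\<Sum>i<k. V xl i * \<sigma> i * (1 / d i) * R i j))
         \<le> L_SCL k P fV fL"
proof (intro allI)
  fix fV fL
  let ?fV = "\<lambda>xv j. (1 / sqrt (margV P xv)) * (\<Sum>i<k. U xv i * d i * R i j)"
  let ?fL = "\<lambda>xl j. (1 / sqrt (margL P xl)) * (\<Sum>i<k. V xl i * \<sigma> i * (1 / d i) * R i j)"
  have optimal: "(\<Sum>j<k. (sqrt (margV P x) * ?fV x j) * (sqrt (margL P y) * ?fL y j))
      = (\<Sum>i<k. U x i * \<sigma> i * V y i)" for x y
  proof -
    have "(\<Sum>j<k. (sqrt (margV P x) * ?fV x j) * (sqrt (margL P y) * ?fL y j))
        = inner_k k (\<lambda>j. \<Sum>i<k. (U x i * d i) * R i j) (\<lambda>j. \<Sum>i<k. (V y i * \<sigma> i * (1 / d i)) * R i j)"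
      using posV[rule_format, of x] posL[rule_format, of y] by (simp add: inner_k_def)
    also have "\<dots> = (\<Sum>i<k. (U x i * d i) * (V y i * \<sigma> i * (1 / d i)))"
      by (rule inner_k_orthogonal_k[OF R_orth])
    also have "\<dots> = (\<Sum>i<k. U x i * \<sigma> i * V y i)"
      using d_inv by (intro sum.cong refl) simp
    finally show ?thesis .
  qed
  have residual: "Ptilde P x y - (\<Sum>i<k. U x i * \<sigma> i * V y i) = (\<Sum>i\<in>{k..<r}. U x i * \<sigma> i * V y i)" for x y
    using svd sum_lessThan_split[OF k_le, of "\<lambda>i. U x i * \<sigma> i * V y i"] by simp
  have "L_SCL k P ?fV ?fL = (\<Sum>i\<in>{k..<r}. (\<sigma> i)\<^sup>2) - (\<Sum>x\<in>UNIV. \<Sum>y\<in>UNIV. (Ptilde P x y)\<^sup>2)"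
    unfolding L_SCL_eq_approx_error[OF posV[rule_format] posL[rule_format]] optimal residual
    using sum_sq_svd_terms[OF U_on V_on, of "{k..<r}" \<sigma>] by (simp add: subset_iff)
  also have "\<dots> \<le> L_SCL k P fV fL"
    unfolding L_SCL_eq_approx_error[OF posV[rule_format] posL[rule_format]]
    using eckart_young_lower_bound[OF U_on V_on k_le, of \<sigma> "\<lambda>x j. sqrt (margV P x) * fV x j"
        "\<lambda>y j. sqrt (margL P y) * fL y j"] \<sigma>_mono \<sigma>_nonneg svd
    by simp
  finally show "L_SCL k P ?fV ?fL \<le> L_SCL k P fV fL" .
qed

end
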